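(* Let $C\subset\mathbb{R}^d$ be a smooth centrally symmetric convex body and let $(G,p)$ be a framework in $\mathbb{R}^d$ that is regular with respect to $\|\cdot\|_C$. Then $(G,p)$ is constant with respect to $\|\cdot\|_C$.
   Context: A centrally symmetric convex body $C$ (compact, convex, non-empty interior, $C=-C$) defines the norm $\|x\|_C=\inf\{\lambda>0:x\in\lambda C\}$; $C$ is smooth if every boundary point has a unique supporting hyperplane. A framework $(G,p)$ is a finite simple graph $G=(V,E)$ with $p=(p_v)_{v\in V}\in\mathbb{R}^{d|V|}$. It is well-positioned if $p_v\ne p_w$ for all $vw\in E$ and $f_{G,C}:q\mapsto(\tfrac12\|q_v-q_w\|_C^2)_{vw\in E}$ is differentiable at $p$; then the rigidity matrix $R_C(G,p)$ is the derivative of $f_{G,C}$ at $p$ (row $vw$ has $\varphi_C(p_v-p_w)$ in the $v$ columns, $\varphi_C(p_w-p_v)$ in the $w$ columns, zeros elsewhere, where $\varphi_C(x)$ is the derivative of $\tfrac12\|\cdot\|_C^2$ at $x$). $(G,p)$ is regular if it is well-positioned and $\operatorname{rank}R_C(G,p)\ge\operatorname{rank}R_C(G,q)$ for every well-positioned placement $q$ of $G$. $(G,p)$ is constant if there is a neighbourhood $U$ of $p$ in $\mathbb{R}^{d|V|}$ such that every $q\in U$ gives a well-positioned $(G,q)$ with $\operatorname{rank}R_C(G,q)=\operatorname{rank}R_C(G,p)$. *)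

theory Defs
  imports "HOL-Analysis.Analysis"
begin

definition cs_convex_body :: "'a::euclidean_space set \<Rightarrow> bool" where
  "cs_convex_body C \<longleftrightarrow> compact C \<and> convex C \<and> interior C \<noteq> {} \<and> uminus ` C = C"

definition normC :: "'a::euclidean_space set \<Rightarrow> 'a \<Rightarrow> real" where
  "normC C x = Inf {t. t > 0 \<and> x \<in> (\<lambda>y. t *\<^sub>R y) ` C}"

definition supporting_hyperplane :: "'a::euclidean_space set \<Rightarrow> 'a \<Rightarrow> 'a set \<Rightarrow> bool" where
  "supporting_hyperplane C x H \<longleftrightarrow>
     (\<exists>a b. a \<noteq> 0 \<and> H = {y. inner a y = b} \<and> x \<in> H \<and> (\<forall>y\<in>C. inner a y \<le> b))"

definition smooth_body :: "'a::euclidean_space set \<Rightarrow> bool" where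
  "smooth_body C \<longleftrightarrow> (\<forall>x\<in>frontier C. \<exists>!H. supporting_hyperplane C x H)"

definition simple_graph :: "('v \<times> 'v) set \<Rightarrow> bool" where
  "simple_graph E \<longleftrightarrow> (\<forall>v. (v, v) \<notin> E) \<and> (\<forall>v w. (v, w) \<in> E \<longrightarrow> (w, v) \<in> E)"

definition edge_fun :: "'a::euclidean_space set \<Rightarrow> ('v::finite \<times> 'v) set \<Rightarrow> 'a ^ 'v \<Rightarrow> real ^ ('v \<times> 'v)" where
  "edge_fun C E q = (\<chi> e. if e \<in> E then (normC C (q $ fst e - q $ snd e))\<^sup>2 / 2 else 0)"

definition well_positioned :: "'a::euclidean_space set \<Rightarrow> ('v::finite \<times> 'v) set \<Rightarrow> 'a ^ 'v \<Rightarrow> bool" where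
  "well_positioned C E p \<longleftrightarrow>
     (\<forall>v w. (v, w) \<in> E \<longrightarrow> p $ v \<noteq> p $ w) \<and> edge_fun C E differentiable (at p)"

text \<open>Rank of the rigidity matrix = rank of the derivative of f_{G,C} at p.\<close>
definition rigidity_rank :: "'a::euclidean_space set \<Rightarrow> ('v::finite \<times> 'v) set \<Rightarrow> 'a ^ 'v \<Rightarrow> nat" where
  "rigidity_rank C E p = dim (range (frechet_derivative (edge_fun C E) (at p)))"

definition regular_fw :: "'a::euclidean_space set \<Rightarrow> ('v::finite \<times> 'v) set \<Rightarrow> 'a ^ 'v \<Rightarrow> bool" where
  "regular_fw C E p \<longleftrightarrow> well_positioned C E p \<and>
     (\<forall>q. well_positioned C E q \<longrightarrow> rigidity_rank C E q \<le> rigidity_rank C E p)"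

definition constant_fw :: "'a::euclidean_space set \<Rightarrow> ('v::finite \<times> 'v) set \<Rightarrow> 'a ^ 'v \<Rightarrow> bool" where
  "constant_fw C E p \<longleftrightarrow> (\<exists>U. open U \<and> p \<in> U \<and>
     (\<forall>q\<in>U. well_positioned C E q \<and> rigidity_rank C E q = rigidity_rank C E p))"

end

theory Submission
  imports Defs
begin

text \<open>For a smooth body the function \<open>\<parallel>x\<parallel>\<^sub>C\<^sup>2 / 2\<close> is continuously
  differentiable: its gradient at \<open>x\<close> is \<open>\<parallel>x\<parallel>\<^sub>C\<close> times the unique functional norming \<open>x\<close>
  (unique because the supporting hyperplane at \<open>x / \<parallel>x\<parallel>\<^sub>C\<close> is), and this functional
  depends continuously on \<open>x \<noteq> 0\<close> because its graph is closed and bounded. Hence the edge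
  function is differentiable everywhere, so the well-positioned placements form an open set, and
  the rigidity matrix depends continuously on the placement. The rank of a continuously varying
  linear map is lower semicontinuous, and at a regular placement it is also maximal, so it is
  locally constant.\<close>

lemma eq_if_same_positive_upper_bounds:
  fixes a b :: real
  assumes "a \<ge> 0" "b \<ge> 0" "\<And>s. s > 0 \<Longrightarrow> a \<le> s \<longleftrightarrow> b \<le> s"
  shows "a = b"
proof (rule ccontr)
  assume "a \<noteq> b"
  then consider "a < b" | "b < a" by linarith
  then show False using assms(3)[of "(a + b) / 2"] assms(1,2) by cases auto
qed

lemma hyperplane_eq_imp_normal_eq:
  fixes a b :: "'a::real_inner"
  assumes "{y. a \<bullet> y = 1} = {y. b \<bullet> y = 1}" and "a \<noteq> 0"
  shows "a = b"
proof -
  have aa: "a \<bullet> a > 0" using assms(2) by simp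
  have "a \<bullet> (a /\<^sub>R (a \<bullet> a)) = 1" using aa by simp
  then have "b \<bullet> (a /\<^sub>R (a \<bullet> a)) = 1" using assms(1) by blast
  then have ba: "b \<bullet> a = a \<bullet> a" using aa by (simp add: field_simps)
  then have bb: "b \<bullet> b > 0" using aa by auto
  have "b \<bullet> (b /\<^sub>R (b \<bullet> b)) = 1" using bb by simp
  then have "a \<bullet> (b /\<^sub>R (b \<bullet> b)) = 1" using assms(1) by blast
  then have ab: "a \<bullet> b = b \<bullet> b" using bb by (simp add: field_simps)
  have "(a - b) \<bullet> (a - b) = a \<bullet> a - 2 * (a \<bullet> b) + b \<bullet> b"
    by (simp add: inner_diff_left inner_diff_right inner_commute)
  also have "\<dots> = 0" using ab ba by (simp add: inner_commute)
  finally show ?thesis by simp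
qed

text \<open>The subgradient inequalities at \<open>x\<close> and at \<open>x'\<close> squeeze the remainder between \<open>0\<close> and
  \<open>(\<phi> x' - \<phi> x) \<bullet> (x' - x)\<close>.\<close>
lemma has_derivative_if_continuous_subgradient:
  fixes f :: "'a::real_inner \<Rightarrow> real"
  assumes subgradient: "\<And>x y. \<phi> x \<bullet> (y - x) \<le> f y - f x" and cont: "isCont \<phi> x"
  shows "(f has_derivative (\<lambda>h. \<phi> x \<bullet> h)) (at x)"
  unfolding has_derivative_at'
proof (intro conjI allI impI)
  show "bounded_linear (\<lambda>h. \<phi> x \<bullet> h)" by (rule bounded_linear_inner_right)
  fix e :: real
  assume "e > 0"
  then obtain d where d: "d > 0" "\<And>x'. dist x' x < d \<Longrightarrow> dist (\<phi> x') (\<phi> x) < e"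
    using cont unfolding continuous_at_eps_delta by blast
  show "\<exists>d>0. \<forall>x'. 0 < norm (x' - x) \<and> norm (x' - x) < d \<longrightarrow>
           norm (f x' - f x - \<phi> x \<bullet> (x' - x)) / norm (x' - x) < e"
  proof (intro exI[of _ d] conjI allI impI)
    fix x'
    assume x': "0 < norm (x' - x) \<and> norm (x' - x) < d"
    define r where "r = f x' - f x - \<phi> x \<bullet> (x' - x)"
    have "0 \<le> r" using subgradient[of x x'] unfolding r_def by simp
    have "f x' - f x \<le> \<phi> x' \<bullet> (x' - x)"
      using subgradient[of x' x] by (simp add: inner_diff_right)
    then have "r \<le> (\<phi> x' - \<phi> x) \<bullet> (x' - x)" unfolding r_def by (simp add: inner_diff_left)
    also have "\<dots> \<le> norm (\<phi> x' - \<phi> x) * norm (x' - x)" by (rule norm_cauchy_schwarz)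
    also have "\<dots> < e * norm (x' - x)"
      using d(2)[of x'] x' by (intro mult_strict_right_mono) (auto simp: dist_norm)
    finally show "norm r / norm (x' - x) < e" using \<open>0 \<le> r\<close> x' by (simp add: field_simps)
  qed (fact \<open>d > 0\<close>)
qed

lemma dim_range_lower_semicontinuous:
  fixes f :: "'a::euclidean_space \<Rightarrow> 'b::euclidean_space"
  assumes "linear f"
  obtains c where "c > 0"
    and "\<And>g m. linear g \<Longrightarrow> m < c \<Longrightarrow> (\<And>x. norm (g x - f x) \<le> m * norm x) \<Longrightarrow>
           dim (range f) \<le> dim (range g)"
proof -
  define K where "K = {y. \<forall>x. f x = 0 \<longrightarrow> orthogonal x y}"
  have "subspace K" unfolding K_def using subspace_orthogonal_to_vectors[of "{x. f x = 0}"] by simp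
  then have span_K: "span K = K" by (simp add: span_eq_iff)
  have inj_on_K: "inj_on h (span K)" if "linear h" "\<And>x. x \<in> K \<Longrightarrow> h x = 0 \<Longrightarrow> x = 0" for h
  proof (rule inj_onI)
    fix x y
    assume "x \<in> span K" "y \<in> span K" "h x = h y"
    then have "x - y \<in> K" "h (x - y) = 0"
      using \<open>subspace K\<close> span_K linear_diff[OF \<open>linear h\<close>] by (auto simp: subspace_diff)
    then have "x - y = 0" using that(2) by blast
    then show "x = y" by simp
  qed
  have kernel_K: "x = 0" if "x \<in> K" "f x = 0" for x
  proof -
    have "orthogonal x x" using that unfolding K_def by blast
    then show ?thesis by (simp add: orthogonal_def)
  qed
  have "range f \<subseteq> f ` K"
  proof
    fix u
    assume "u \<in> range f"
    then obtain h where "u = f h" by auto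
    obtain y z where yz: "y \<in> span {x. f x = 0}" "\<And>w. w \<in> span {x. f x = 0} \<Longrightarrow> orthogonal z w"
      "h = y + z"
      using orthogonal_subspace_decomp_exists[of "{x. f x = 0}" h] by blast
    have span_kernel: "span {x. f x = 0} = {x. f x = 0}"
      using linear_subspace_kernel[OF assms] by (simp only: span_eq_iff)
    then have "f y = 0" using yz(1) by blast
    then have "u = f z" using \<open>u = f h\<close> yz(3) linear_add[OF assms] by simp
    moreover have "z \<in> K" using yz(2) span_kernel unfolding K_def by (auto simp: orthogonal_commute)
    ultimately show "u \<in> f ` K" by blast
  qed
  then have "range f = f ` K" by auto
  then have dim_f: "dim (range f) = dim K"
    using dim_image_eq[OF assms inj_on_K[OF assms kernel_K]] by simp
  obtain c where "c > 0" and c: "\<And>x. x \<in> K \<Longrightarrow> c * norm x \<le> norm (f x)"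
    using injective_imp_isometric[OF closed_subspace[OF \<open>subspace K\<close>] \<open>subspace K\<close>
        linear_conv_bounded_linear[THEN iffD1, OF assms]] kernel_K by blast
  show thesis
  proof (rule that[OF \<open>c > 0\<close>])
    fix g m
    assume "linear g" "m < c" and close: "\<And>x. norm (g x - f x) \<le> m * norm x"
    have "x = 0" if "x \<in> K" "g x = 0" for x
    proof (rule ccontr)
      assume "x \<noteq> 0"
      have "c * norm x \<le> norm (g x - f x)" using c[OF \<open>x \<in> K\<close>] \<open>g x = 0\<close> by simp
      also have "\<dots> \<le> m * norm x" by (rule close)
      finally show False using \<open>m < c\<close> \<open>x \<noteq> 0\<close> by simp
    qed
    then have "dim (g ` K) = dim K" by (rule dim_image_eq[OF \<open>linear g\<close> inj_on_K[OF \<open>linear g\<close>]])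
    moreover have "dim (g ` K) \<le> dim (range g)" by (rule dim_subset) auto
    ultimately show "dim (range f) \<le> dim (range g)" using dim_f by simp
  qed
qed

section \<open>The norm of a centrally symmetric convex body\<close>

locale symmetric_convex_body =
  fixes C :: "'a::euclidean_space set"
  assumes cs_convex_body: "cs_convex_body C"
begin

lemma convex: "convex C" and compact: "compact C" and closed: "closed C"
  using cs_convex_body unfolding cs_convex_body_def by (auto simp: compact_imp_closed)

lemma uminus_image: "uminus ` C = C"
  using cs_convex_body unfolding cs_convex_body_def by blast

lemma minus_mem: "x \<in> C \<Longrightarrow> - x \<in> C"
  using uminus_image by (metis image_eqI)

lemma zero_in_interior: "0 \<in> interior C"
proof -
  obtain x where x: "x \<in> interior C"
    using cs_convex_body unfolding cs_convex_body_def by auto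
  have "interior C = uminus ` interior C"
    using interior_injective_linear_image[of uminus C] uminus_image
    by (simp add: linear_uminus inj_def)
  then have "- x \<in> interior C" using x by (metis image_eqI)
  then have "(1/2) *\<^sub>R x + (1/2) *\<^sub>R (- x) \<in> interior C"
    using convexD[OF convex_interior[OF convex] x, of "- x" "1/2" "1/2"] by simp
  then show ?thesis by simp
qed

text \<open>Some radius of a ball around \<open>0\<close> inside \<open>C\<close>, not necessarily the largest one.\<close>
definition inner_radius :: real where
  "inner_radius = (SOME r. r > 0 \<and> cball 0 r \<subseteq> C)"

lemma inner_radius: "inner_radius > 0" "cball 0 inner_radius \<subseteq> C"
  using someI_ex[OF zero_in_interior[unfolded mem_interior_cball]]
  unfolding inner_radius_def by auto

lemma zero_mem: "0 \<in> C"
  using interior_subset zero_in_interior by blast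

definition dilations :: "'a \<Rightarrow> real set" where
  "dilations x = {t. t > 0 \<and> x \<in> (\<lambda>y. t *\<^sub>R y) ` C}"

lemma normC_eq_Inf_dilations: "normC C x = Inf (dilations x)"
  unfolding normC_def dilations_def ..

lemma mem_dilations_iff: "t \<in> dilations x \<longleftrightarrow> t > 0 \<and> x /\<^sub>R t \<in> C"
proof
  assume "t > 0 \<and> x /\<^sub>R t \<in> C"
  moreover from this have "x = t *\<^sub>R (x /\<^sub>R t)" by simp
  ultimately show "t \<in> dilations x" unfolding dilations_def by blast
qed (auto simp: dilations_def)

lemma dilations_nonempty: "dilations x \<noteq> {}"
proof -
  define t where "t = norm x / inner_radius + 1"
  have t: "t > 0" using inner_radius by (simp add: t_def add_nonneg_pos)
  have "norm x \<le> inner_radius * t" using inner_radius by (simp add: t_def field_simps)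
  then have "norm (x /\<^sub>R t) \<le> inner_radius" using t by (simp add: field_simps)
  then have "x /\<^sub>R t \<in> C" using inner_radius by auto
  then show ?thesis using t mem_dilations_iff by blast
qed

lemma bdd_below_dilations: "bdd_below (dilations x)"
  by (rule bdd_belowI[of _ 0]) (auto simp: mem_dilations_iff)

lemma dilations_upclosed:
  assumes "t \<in> dilations x" "t \<le> s"
  shows "s \<in> dilations x"
proof -
  have t: "t > 0" "x /\<^sub>R t \<in> C" using assms(1) mem_dilations_iff by auto
  have s: "s > 0" using t assms(2) by auto
  have "(t/s) *\<^sub>R (x /\<^sub>R t) + (1 - t/s) *\<^sub>R 0 \<in> C"
    using convexD[OF convex t(2) zero_mem, of "t/s" "1 - t/s"] t s assms(2) by simp
  moreover have "(t/s) *\<^sub>R (x /\<^sub>R t) + (1 - t/s) *\<^sub>R 0 = x /\<^sub>R s"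
    using t s by (simp add: inverse_eq_divide)
  ultimately show ?thesis using s mem_dilations_iff by auto
qed

lemma normC_nonneg: "normC C x \<ge> 0"
  unfolding normC_eq_Inf_dilations
  by (rule cInf_greatest[OF dilations_nonempty]) (auto simp: mem_dilations_iff)

lemma normC_le_iff:
  assumes "s > 0"
  shows "normC C x \<le> s \<longleftrightarrow> x /\<^sub>R s \<in> C"
proof
  assume "x /\<^sub>R s \<in> C"
  then have "s \<in> dilations x" using assms mem_dilations_iff by auto
  then show "normC C x \<le> s"
    unfolding normC_eq_Inf_dilations by (rule cInf_lower[OF _ bdd_below_dilations])
next
  assume le: "normC C x \<le> s"
  have above: "t \<in> dilations x" if "t > s" for t
  proof -
    have "Inf (dilations x) < t" using le that normC_eq_Inf_dilations by auto
    then obtain u where "u \<in> dilations x" "u < t"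
      using cInf_less_iff[OF dilations_nonempty bdd_below_dilations] by auto
    then show ?thesis using dilations_upclosed by auto
  qed
  define f where "f n = x /\<^sub>R (s + inverse (real (Suc n)))" for n
  have "f n \<in> C" for n
    using above[of "s + inverse (real (Suc n))"] mem_dilations_iff unfolding f_def by auto
  moreover have "f \<longlonglongrightarrow> x /\<^sub>R s"
    unfolding f_def using assms by (intro tendsto_intros LIMSEQ_inverse_real_of_nat_add) auto
  ultimately show "x /\<^sub>R s \<in> C" using closed_sequentially[OF closed] by blast
qed

lemma mem_iff_normC_le_1: "x \<in> C \<longleftrightarrow> normC C x \<le> 1"
  using normC_le_iff[of 1] by simp

lemma normC_0 [simp]: "normC C 0 = 0"
  using eq_if_same_positive_upper_bounds[OF normC_nonneg order_refl] normC_le_iff zero_mem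
  by auto

lemma normC_scaleR:
  assumes "c \<ge> 0"
  shows "normC C (c *\<^sub>R x) = c * normC C x"
proof (cases "c = 0")
  case False
  with assms have c: "c > 0" by simp
  show ?thesis
  proof (rule eq_if_same_positive_upper_bounds[OF normC_nonneg])
    show "0 \<le> c * normC C x" using c normC_nonneg by simp
    fix s :: real
    assume s: "s > 0"
    have "normC C (c *\<^sub>R x) \<le> s \<longleftrightarrow> (c *\<^sub>R x) /\<^sub>R s \<in> C" using normC_le_iff s by blast
    also have "(c *\<^sub>R x) /\<^sub>R s = x /\<^sub>R (s / c)" using c by (simp add: field_simps)
    also have "\<dots> \<in> C \<longleftrightarrow> normC C x \<le> s / c" using normC_le_iff s c by simp
    also have "\<dots> \<longleftrightarrow> c * normC C x \<le> s" using c by (simp add: field_simps)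
    finally show "normC C (c *\<^sub>R x) \<le> s \<longleftrightarrow> c * normC C x \<le> s" .
  qed
qed simp

lemma normC_minus: "normC C (- x) = normC C x"
proof (rule eq_if_same_positive_upper_bounds[OF normC_nonneg normC_nonneg])
  fix s :: real
  assume "s > 0"
  then show "normC C (- x) \<le> s \<longleftrightarrow> normC C x \<le> s"
    using normC_le_iff[of s "- x"] normC_le_iff[of s x] minus_mem by fastforce
qed

lemma normC_triangle: "normC C (x + y) \<le> normC C x + normC C y"
proof (rule field_le_epsilon)
  fix e :: real
  assume e: "e > 0"
  define s t where "s = normC C x + e/2" and "t = normC C y + e/2"
  have st: "s > 0" "t > 0" using normC_nonneg e by (auto simp: s_def t_def add_nonneg_pos)
  have "normC C x \<le> s" "normC C y \<le> t" using e by (auto simp: s_def t_def)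
  then have xs: "x /\<^sub>R s \<in> C" and yt: "y /\<^sub>R t \<in> C" using normC_le_iff st by auto
  have "(s/(s+t)) *\<^sub>R (x /\<^sub>R s) + (t/(s+t)) *\<^sub>R (y /\<^sub>R t) \<in> C"
    using convexD[OF convex xs yt, of "s/(s+t)" "t/(s+t)"] st
    by (simp add: add_divide_distrib[symmetric])
  moreover have "(s/(s+t)) *\<^sub>R (x /\<^sub>R s) + (t/(s+t)) *\<^sub>R (y /\<^sub>R t) = (x + y) /\<^sub>R (s + t)"
    using st by (simp add: scaleR_add_right inverse_eq_divide)
  ultimately have "normC C (x + y) \<le> s + t" using normC_le_iff[of "s + t"] st by simp
  then show "normC C (x + y) \<le> normC C x + normC C y + e" by (simp add: s_def t_def)
qed

lemma normC_le_norm: "normC C x \<le> norm x / inner_radius"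
proof (cases "x = 0")
  case False
  then have s: "norm x / inner_radius > 0" using inner_radius by simp
  have "norm (x /\<^sub>R (norm x / inner_radius)) = inner_radius" using False inner_radius by simp
  then have "x /\<^sub>R (norm x / inner_radius) \<in> C" using inner_radius by auto
  then show ?thesis using normC_le_iff[OF s] by simp
qed simp

lemma normC_pos:
  assumes "x \<noteq> 0"
  shows "normC C x > 0"
proof (rule ccontr)
  assume "\<not> normC C x > 0"
  then have "normC C x \<le> s" if "s > 0" for s using that by linarith
  then have small: "x /\<^sub>R s \<in> C" if "s > 0" for s using normC_le_iff that by blast
  obtain R where R: "R > 0" "\<And>y. y \<in> C \<Longrightarrow> norm y \<le> R"
    using compact compact_imp_bounded bounded_pos by metis
  define s where "s = norm x / (2 * R)"
  have "s > 0" using R assms by (simp add: s_def)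
  then have "norm (x /\<^sub>R s) \<le> R" using R small by blast
  moreover have "norm (x /\<^sub>R s) = 2 * R" using R assms by (simp add: s_def)
  ultimately show False using R by simp
qed

lemma normC_diff_le: "\<bar>normC C x - normC C y\<bar> \<le> norm (x - y) / inner_radius"
proof -
  have "normC C x \<le> normC C (x - y) + normC C y" using normC_triangle[of "x - y" y] by simp
  moreover have "normC C y \<le> normC C (x - y) + normC C x"
    using normC_triangle[of "y - x" x] normC_minus[of "x - y"] by simp
  ultimately show ?thesis using normC_le_norm[of "x - y"] by linarith
qed

lemma continuous_on_normC: "continuous_on UNIV (normC C)"
proof (rule lipschitz_on_continuous_on)
  show "(1 / inner_radius)-lipschitz_on UNIV (normC C)"
    by (rule lipschitz_onI) (use normC_diff_le inner_radius in \<open>auto simp: dist_norm dist_real_def\<close>)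
qed

section \<open>Norming functionals and the gradient of the squared norm\<close>

definition norming :: "'a \<Rightarrow> 'a \<Rightarrow> bool" where
  "norming x l \<longleftrightarrow> (\<forall>y. l \<bullet> y \<le> normC C y) \<and> l \<bullet> x = normC C x"

lemma norm_le_if_norming:
  assumes "norming x l"
  shows "norm l \<le> 1 / inner_radius"
proof (cases "l = 0")
  case False
  have "norm l * norm l = l \<bullet> l" by (simp add: dot_square_norm power2_eq_square)
  also have "\<dots> \<le> normC C l" using assms norming_def by auto
  also have "\<dots> \<le> norm l * (1 / inner_radius)" using normC_le_norm by simp
  finally show ?thesis using False by (metis mult_le_cancel_left_pos zero_less_norm_iff)
qed (use inner_radius in simp)

lemma frontier_if_normC_eq_1:
  assumes "normC C z = 1"
  shows "z \<in> frontier C"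
proof -
  have "z \<notin> interior C"
  proof
    assume "z \<in> interior C"
    then obtain e where e: "e > 0" "ball z e \<subseteq> C" by (meson mem_interior)
    have "z \<noteq> 0" using assms by auto
    define w where "w = (1 + e / (2 * norm z)) *\<^sub>R z"
    have "dist z w = e / 2" using \<open>z \<noteq> 0\<close> e by (simp add: w_def dist_norm algebra_simps)
    then have "w \<in> C" using e by auto
    then have "normC C w \<le> 1" using mem_iff_normC_le_1 by blast
    moreover have "normC C w = 1 + e / (2 * norm z)"
      unfolding w_def using normC_scaleR[of "1 + e / (2 * norm z)" z] assms e by simp
    moreover have "e / (2 * norm z) > 0" using e \<open>z \<noteq> 0\<close> by simp
    ultimately show False by linarith
  qed
  then show ?thesis using assms mem_iff_normC_le_1 closed by (simp add: frontier_def closure_closed)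
qed

lemma normC_normalize:
  assumes "x \<noteq> 0"
  shows "normC C (x /\<^sub>R normC C x) = 1"
  using normC_scaleR[of "inverse (normC C x)" x] normC_pos[OF assms] by simp

lemma norming_iff_supporting:
  assumes "x \<noteq> 0"
  shows "norming x l \<longleftrightarrow> (\<forall>y\<in>C. l \<bullet> y \<le> 1) \<and> l \<bullet> (x /\<^sub>R normC C x) = 1"
proof
  assume "norming x l"
  then show "(\<forall>y\<in>C. l \<bullet> y \<le> 1) \<and> l \<bullet> (x /\<^sub>R normC C x) = 1"
    using mem_iff_normC_le_1 normC_pos[OF assms] unfolding norming_def by (auto intro: order_trans)
next
  assume l: "(\<forall>y\<in>C. l \<bullet> y \<le> 1) \<and> l \<bullet> (x /\<^sub>R normC C x) = 1"
  have "l \<bullet> y \<le> normC C y" for y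
  proof (cases "y = 0")
    case False
    then have "y /\<^sub>R normC C y \<in> C" using normC_normalize mem_iff_normC_le_1 by simp
    then have "l \<bullet> (y /\<^sub>R normC C y) \<le> 1" using l by blast
    then show ?thesis using normC_pos[OF False] by (simp add: field_simps)
  qed simp
  moreover have "l \<bullet> x = normC C x"
    using l normC_pos[OF assms] by (simp add: field_simps)
  ultimately show "norming x l" unfolding norming_def by blast
qed

lemma exists_supporting_functional:
  assumes "normC C z = 1"
  obtains l where "\<forall>y\<in>C. l \<bullet> y \<le> 1" and "l \<bullet> z = 1"
proof -
  have "z \<in> closure C" using assms mem_iff_normC_le_1 closed by (simp add: closure_closed)
  moreover have "z \<notin> rel_interior C"
    using frontier_if_normC_eq_1[OF assms] cs_convex_body rel_interior_nonempty_interior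
    by (auto simp: cs_convex_body_def frontier_def)
  ultimately obtain a where "a \<noteq> 0" and a: "\<And>y. y \<in> closure C \<Longrightarrow> a \<bullet> z \<le> a \<bullet> y"
    using supporting_hyperplane_relative_frontier[OF convex] by metis
  define b where "b = - a"
  have "b \<noteq> 0" using \<open>a \<noteq> 0\<close> b_def by auto
  have bC: "b \<bullet> y \<le> b \<bullet> z" if "y \<in> C" for y
    using a[of y] that closure_subset b_def by auto
  txt \<open>\<open>b \<bullet> z > 0\<close>: test \<open>b\<close> against the point of the inner ball in direction \<open>b\<close>.\<close>
  define y0 where "y0 = (inner_radius / norm b) *\<^sub>R b"
  have "y0 \<in> C" using \<open>b \<noteq> 0\<close> inner_radius by (auto simp: y0_def)
  moreover have "b \<bullet> y0 = inner_radius * norm b"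
    using \<open>b \<noteq> 0\<close> by (simp add: y0_def dot_square_norm power2_eq_square)
  ultimately have "inner_radius * norm b \<le> b \<bullet> z" using bC by fastforce
  moreover have "inner_radius * norm b > 0" using inner_radius \<open>b \<noteq> 0\<close> by simp
  ultimately have "b \<bullet> z > 0" by linarith
  show thesis
  proof (rule that[of "b /\<^sub>R (b \<bullet> z)"])
    show "\<forall>y\<in>C. (b /\<^sub>R (b \<bullet> z)) \<bullet> y \<le> 1" using bC \<open>b \<bullet> z > 0\<close> by (simp add: field_simps)
    show "(b /\<^sub>R (b \<bullet> z)) \<bullet> z = 1" using \<open>b \<bullet> z > 0\<close> by simp
  qed
qed

lemma norming_exists: "\<exists>l. norming x l"
proof (cases "x = 0")
  case True
  then show ?thesis by (intro exI[of _ 0]) (simp add: norming_def normC_nonneg)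
next
  case False
  then obtain l where "\<forall>y\<in>C. l \<bullet> y \<le> 1" and "l \<bullet> (x /\<^sub>R normC C x) = 1"
    using exists_supporting_functional normC_normalize by metis
  then show ?thesis using norming_iff_supporting[OF False] by blast
qed

lemma norming_unique:
  assumes "smooth_body C" and "x \<noteq> 0" and "norming x l" and "norming x l'"
  shows "l = l'"
proof -
  define z where "z = x /\<^sub>R normC C x"
  have "z \<in> frontier C"
    unfolding z_def by (rule frontier_if_normC_eq_1[OF normC_normalize[OF assms(2)]])
  have supporting: "supporting_hyperplane C z {y. l \<bullet> y = 1}" if "norming x l" for l
    using that norming_iff_supporting[OF assms(2)] unfolding supporting_hyperplane_def z_def
    by (intro exI[of _ l] exI[of _ 1]) auto
  have "\<exists>!H. supporting_hyperplane C z H"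
    using assms(1) \<open>z \<in> frontier C\<close> unfolding smooth_body_def by blast
  then have "{y. l \<bullet> y = 1} = {y. l' \<bullet> y = 1}"
    using supporting[OF assms(3)] supporting[OF assms(4)] by blast
  moreover have "l \<noteq> 0" using assms(3) normC_pos[OF assms(2)] by (auto simp: norming_def)
  ultimately show ?thesis by (rule hyperplane_eq_imp_normal_eq)
qed

text \<open>At \<open>0\<close> every functional of dual norm at most 1 is norming, so the choice there is
  fixed to \<open>0\<close> rather than left to \<open>THE\<close>.\<close>
definition norming_map :: "'a \<Rightarrow> 'a" where
  "norming_map x = (if x = 0 then 0 else THE l. norming x l)"

lemma norming_norming_map:
  assumes "smooth_body C"
  shows "norming x (norming_map x)"
proof (cases "x = 0")
  case False
  then have "\<exists>!l. norming x l" using norming_exists norming_unique[OF assms] by blast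
  then show ?thesis using False by (simp add: norming_map_def theI')
qed (simp add: norming_map_def norming_def normC_nonneg)

lemma norming_map_eqI: "smooth_body C \<Longrightarrow> x \<noteq> 0 \<Longrightarrow> norming x l \<Longrightarrow> norming_map x = l"
  using norming_norming_map norming_unique by blast

lemma norm_norming_map_le: "smooth_body C \<Longrightarrow> norm (norming_map x) \<le> 1 / inner_radius"
  using norming_norming_map norm_le_if_norming by blast

lemma closed_norming_graph: "closed {(x, l). norming x l}"
proof -
  have "{(x, l). norming x l} =
      (\<Inter>y. {z. snd z \<bullet> y \<le> normC C y}) \<inter> {z. snd z \<bullet> fst z = normC C (fst z)}"
    unfolding norming_def by auto
  moreover have "continuous_on UNIV (\<lambda>z::'a \<times> 'a. normC C (fst z))"
    by (rule continuous_on_compose2[OF continuous_on_normC continuous_on_fst])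
      (auto intro: continuous_on_id)
  ultimately show ?thesis
    by (simp only:) (intro closed_Int closed_INT ballI closed_Collect_le closed_Collect_eq
        continuous_intros)
qed

lemma continuous_on_norming_map:
  assumes "smooth_body C"
  shows "continuous_on (- {0}) norming_map"
proof -
  let ?T = "cball (0::'a) (1 / inner_radius)"
  have "norming_map \<in> - {0} \<rightarrow> ?T" using norm_norming_map_le[OF assms] by auto
  moreover have "(\<lambda>x. (x, norming_map x)) ` (- {0}) = ((- {0}) \<times> ?T) \<inter> {(x, l). norming x l}"
    using norm_norming_map_le[OF assms] norming_norming_map[OF assms] norming_map_eqI[OF assms]
    by (auto simp: image_iff)
  ultimately show ?thesis
    using continuous_closed_graph_eq[OF compact_cball]
      closedin_closed_Int[OF closed_norming_graph] by metis
qed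

text \<open>The map \<open>\<phi>\<^sub>C\<close> of the paper: the gradient of \<open>\<parallel>\<cdot>\<parallel>\<^sub>C\<^sup>2 / 2\<close>.\<close>
definition phi :: "'a \<Rightarrow> 'a" where
  "phi x = normC C x *\<^sub>R norming_map x"

lemma isCont_phi:
  assumes "smooth_body C"
  shows "isCont phi x"
proof (cases "x = 0")
  case False
  then have "isCont norming_map x"
    using continuous_on_norming_map[OF assms] continuous_on_eq_continuous_at[of "- {0}"] by auto
  moreover have "isCont (normC C) x"
    using continuous_on_normC continuous_on_eq_continuous_at[of UNIV] by auto
  ultimately have "isCont (\<lambda>y. normC C y *\<^sub>R norming_map y) x"
    by (intro continuous_scaleR)
  then show ?thesis unfolding phi_def[abs_def] .
next
  case True
  have bound: "norm (phi y) \<le> norm y * (1 / inner_radius ^ 2)" for y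
  proof -
    have "norm (phi y) = normC C y * norm (norming_map y)" using normC_nonneg by (simp add: phi_def)
    also have "\<dots> \<le> norm y / inner_radius * (1 / inner_radius)"
      using normC_le_norm norm_norming_map_le[OF assms] normC_nonneg inner_radius
      by (intro mult_mono) auto
    finally show ?thesis by (simp add: power2_eq_square)
  qed
  have "((\<lambda>y. norm y * (1 / inner_radius ^ 2)) \<longlongrightarrow> 0) (at (0::'a))"
    by (intro tendsto_mult_left_zero tendsto_norm_zero tendsto_ident_at)
  then have "(phi \<longlongrightarrow> 0) (at 0)"
    by (rule Lim_null_comparison[OF always_eventually[OF allI[OF bound]]])
  moreover have "phi 0 = 0" by (simp add: phi_def)
  ultimately show ?thesis using True by (simp add: isCont_def)
qed

lemma phi_subgradient:
  assumes "smooth_body C"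
  shows "phi x \<bullet> (y - x) \<le> (normC C y)\<^sup>2 / 2 - (normC C x)\<^sup>2 / 2"
proof -
  have norming: "norming x (norming_map x)" by (rule norming_norming_map[OF assms])
  have "phi x \<bullet> (y - x) = normC C x * (norming_map x \<bullet> y - norming_map x \<bullet> x)"
    by (simp add: phi_def inner_diff_right right_diff_distrib)
  also have "\<dots> \<le> normC C x * (normC C y - normC C x)"
    using norming normC_nonneg by (intro mult_left_mono) (auto simp: norming_def)
  also have "\<dots> \<le> (normC C y)\<^sup>2 / 2 - (normC C x)\<^sup>2 / 2"
    using zero_le_power2[of "normC C y - normC C x"] by (simp add: power2_eq_square algebra_simps)
  finally show ?thesis .
qed

lemma has_derivative_half_normC_sq:
  assumes "smooth_body C"
  shows "((\<lambda>x. (normC C x)\<^sup>2 / 2) has_derivative (\<lambda>h. phi x \<bullet> h)) (at x)"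
  by (rule has_derivative_if_continuous_subgradient[OF phi_subgradient isCont_phi]) (fact assms)+

end

section \<open>The rigidity map\<close>

text \<open>For \<open>\<phi> = \<phi>\<^sub>C\<close> this is the linear map of the rigidity matrix \<open>R\<^sub>C(G,q)\<close>; the
  entry \<open>\<phi>\<^sub>C(q\<^sub>w - q\<^sub>v)\<close> of the paper equals \<open>-\<phi>\<^sub>C(q\<^sub>v - q\<^sub>w)\<close> since \<open>\<phi>\<^sub>C\<close> is odd.\<close>
definition rigidity_map ::
    "('a::euclidean_space \<Rightarrow> 'a) \<Rightarrow> ('v::finite \<times> 'v) set \<Rightarrow> 'a ^ 'v \<Rightarrow> 'a ^ 'v \<Rightarrow> real ^ ('v \<times> 'v)" where
  "rigidity_map \<phi> E q = (\<lambda>h. \<Sum>e\<in>E. (\<phi> (q $ fst e - q $ snd e) \<bullet> (h $ fst e - h $ snd e)) *\<^sub>R axis e 1)"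

lemma bounded_linear_rigidity_map: "bounded_linear (rigidity_map \<phi> E q)"
  unfolding rigidity_map_def
  by (intro bounded_linear_sum bounded_linear_scaleR_const bounded_linear_inner_right_comp
      bounded_linear_sub bounded_linear_vec_nth)

lemma norm_rigidity_map_diff_le:
  fixes E :: "('v::finite \<times> 'v) set"
  shows "norm (rigidity_map \<phi> E q h - rigidity_map \<phi> E p h) \<le>
    (\<Sum>e\<in>E. 2 * norm (\<phi> (q $ fst e - q $ snd e) - \<phi> (p $ fst e - p $ snd e))) * norm h"
proof -
  let ?d = "\<lambda>e. \<phi> (q $ fst e - q $ snd e) - \<phi> (p $ fst e - p $ snd e)"
  let ?h = "\<lambda>e. h $ fst e - h $ snd e"
  have "norm (rigidity_map \<phi> E q h - rigidity_map \<phi> E p h) =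
      norm (\<Sum>e\<in>E. (?d e \<bullet> ?h e) *\<^sub>R (axis e 1 :: real ^ ('v \<times> 'v)))"
    unfolding rigidity_map_def by (simp add: sum_subtractf inner_diff_left scaleR_left_diff_distrib)
  also have "\<dots> \<le> (\<Sum>e\<in>E. \<bar>?d e \<bullet> ?h e\<bar>)"
    by (rule order_trans[OF norm_sum]) (simp add: norm_axis_1)
  also have "\<dots> \<le> (\<Sum>e\<in>E. 2 * norm (?d e) * norm h)"
  proof (rule sum_mono)
    fix e
    have "norm (?h e) \<le> 2 * norm h"
      using norm_triangle_ineq4[of "h $ fst e" "h $ snd e"] Finite_Cartesian_Product.norm_nth_le[of h "fst e"]
        Finite_Cartesian_Product.norm_nth_le[of h "snd e"] by linarith
    then have "\<bar>?d e \<bullet> ?h e\<bar> \<le> norm (?d e) * (2 * norm h)"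
      by (rule order_trans[OF Cauchy_Schwarz_ineq2 mult_left_mono]) simp
    then show "\<bar>?d e \<bullet> ?h e\<bar> \<le> 2 * norm (?d e) * norm h" by (simp add: algebra_simps)
  qed
  finally show ?thesis by (simp add: sum_distrib_right)
qed

lemma edge_fun_eq_sum:
  "edge_fun C E = (\<lambda>q. \<Sum>e\<in>E. ((normC C (q $ fst e - q $ snd e))\<^sup>2 / 2) *\<^sub>R axis e (1::real))"
proof (intro ext iffD2[OF vec_eq_iff] allI)
  fix q i
  have "(\<Sum>e\<in>E. ((normC C (q $ fst e - q $ snd e))\<^sup>2 / 2) *\<^sub>R axis e (1::real)) $ i
      = (\<Sum>e\<in>E. if e = i then (normC C (q $ fst e - q $ snd e))\<^sup>2 / 2 else 0)"
    unfolding sum_component by (intro sum.cong refl) (simp add: axis_def)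
  then show "edge_fun C E q $ i = (\<Sum>e\<in>E. ((normC C (q $ fst e - q $ snd e))\<^sup>2 / 2) *\<^sub>R axis e 1) $ i"
    by (simp add: edge_fun_def sum.delta')
qed

context symmetric_convex_body
begin

lemma has_derivative_edge_fun:
  fixes E :: "('v::finite \<times> 'v) set"
  assumes "smooth_body C"
  shows "(edge_fun C E has_derivative rigidity_map phi E q) (at q)"
  unfolding rigidity_map_def edge_fun_eq_sum
proof (intro has_derivative_sum has_derivative_scaleR_left)
  fix e :: "'v \<times> 'v"
  have "((\<lambda>q. q $ fst e - q $ snd e) has_derivative (\<lambda>h. h $ fst e - h $ snd e)) (at q)"
    by (intro bounded_linear_imp_has_derivative bounded_linear_sub bounded_linear_vec_nth)
  from has_derivative_compose[OF this has_derivative_half_normC_sq[OF assms]]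
  show "((\<lambda>q. (normC C (q $ fst e - q $ snd e))\<^sup>2 / 2) has_derivative
      (\<lambda>h. phi (q $ fst e - q $ snd e) \<bullet> (h $ fst e - h $ snd e))) (at q)" .
qed

lemma rigidity_rank_eq:
  fixes E :: "('v::finite \<times> 'v) set"
  assumes "smooth_body C"
  shows "rigidity_rank C E q = dim (range (rigidity_map phi E q))"
  unfolding rigidity_rank_def frechet_derivative_at[OF has_derivative_edge_fun[OF assms]] ..

lemma open_well_positioned:
  fixes E :: "('v::finite \<times> 'v) set"
  assumes "smooth_body C"
  shows "open {q. well_positioned C E q}"
proof -
  have "{q. well_positioned C E q} = (\<Inter>e\<in>E. {q. q $ fst e \<noteq> q $ snd e})"
    using has_derivative_edge_fun[OF assms] unfolding well_positioned_def
    by (fastforce intro: differentiableI)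
  then show ?thesis
    by (simp only:) (intro open_INT finite ballI open_Collect_neq continuous_intros)
qed

text \<open>Near \<open>p\<close> the rigidity map differs from the one at \<open>p\<close> by an operator of small norm,
  since \<open>phi\<close> is continuous.\<close>
lemma rigidity_rank_lower_semicontinuous:
  fixes E :: "('v::finite \<times> 'v) set"
  assumes "smooth_body C"
  shows "\<forall>\<^sub>F q in nhds p. rigidity_rank C E p \<le> rigidity_rank C E q"
proof -
  obtain c where "c > 0" and c: "\<And>g m. linear g \<Longrightarrow> m < c \<Longrightarrow>
      (\<And>x. norm (g x - rigidity_map phi E p x) \<le> m * norm x) \<Longrightarrow>
      dim (range (rigidity_map phi E p)) \<le> dim (range g)"
    using dim_range_lower_semicontinuous[OF bounded_linear_rigidity_map[THEN bounded_linear.linear]]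
    by blast
  define M where "M q = (\<Sum>e\<in>E. 2 * norm (phi (q $ fst e - q $ snd e) - phi (p $ fst e - p $ snd e)))"
    for q
  have "continuous_on UNIV phi"
    using isCont_phi[OF assms] by (simp add: continuous_at_imp_continuous_on)
  moreover have "continuous_on UNIV (\<lambda>q::'a ^ 'v. q $ a - q $ b)" for a b
    by (intro linear_continuous_on bounded_linear_sub bounded_linear_vec_nth)
  ultimately have "continuous_on UNIV (\<lambda>q::'a ^ 'v. phi (q $ a - q $ b))" for a b
    by (rule continuous_on_compose2) auto
  then have "continuous_on UNIV M"
    unfolding M_def by (intro continuous_on_sum continuous_on_mult_left continuous_on_norm
        continuous_on_diff continuous_on_const)
  then have "open {q. M q < c}" by (rule open_Collect_less[OF _ continuous_on_const])
  moreover have "p \<in> {q. M q < c}" using \<open>c > 0\<close> by (simp add: M_def)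
  ultimately have "\<forall>\<^sub>F q in nhds p. q \<in> {q. M q < c}" by (rule eventually_nhds_in_open)
  then show ?thesis
  proof (rule eventually_mono)
    fix q
    assume "q \<in> {q. M q < c}"
    then show "rigidity_rank C E p \<le> rigidity_rank C E q"
      unfolding rigidity_rank_eq[OF assms]
      by (intro c[OF bounded_linear_rigidity_map[THEN bounded_linear.linear]])
        (use norm_rigidity_map_diff_le in \<open>simp_all add: M_def\<close>)
  qed
qed

end

theorem proposition2p6:
  fixes C :: "'a::euclidean_space set" and E :: "('v::finite \<times> 'v) set" and p :: "'a ^ 'v"
  assumes "cs_convex_body C" and "smooth_body C"
    and "simple_graph E"
    and "regular_fw C E p"
  shows "constant_fw C E p"
proof -
  interpret symmetric_convex_body C by unfold_locales (fact assms(1))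
  have "p \<in> {q. well_positioned C E q}" using assms(4) by (simp add: regular_fw_def)
  then have "\<forall>\<^sub>F q in nhds p. q \<in> {q. well_positioned C E q}"
    by (rule eventually_nhds_in_open[OF open_well_positioned[OF assms(2)]])
  moreover have "\<forall>\<^sub>F q in nhds p. rigidity_rank C E p \<le> rigidity_rank C E q"
    by (rule rigidity_rank_lower_semicontinuous[OF assms(2)])
  ultimately have "\<forall>\<^sub>F q in nhds p. well_positioned C E q \<and> rigidity_rank C E q = rigidity_rank C E p"
    by eventually_elim (use assms(4) in \<open>auto simp: regular_fw_def intro: antisym\<close>)
  then show ?thesis unfolding constant_fw_def eventually_nhds by blast
qed

end
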